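(* Let $Q,P\in S^2_0(\mathbb R^4)$ with $\det Q<0$, and suppose that $P=\mu Q$ for some $\mu\in\mathbb R\setminus\{0\}$ (coupled condition) and that $(\operatorname{Adj}Q)_0=\nu\,(P^2)_0$ for some $\nu\in\mathbb R$ (co-coupled condition). Then there exist $g\in\mathrm{SO}(4)$ and nonzero reals $q,p$ such that $Q=q\,gDg^T$ and $P=p\,gDg^T$, where $D=\operatorname{diag}(-3,1,1,1)$. In other words, modulo equivalence and scaling, the unique invariant nearly-Kähler structure on $S^3\times S^3$ corresponds to $(Q,P)=(q\,D,p\,D)$ with cohomology class $c=0$.
   Context: $S^2_0(\mathbb R^4)$ is the space of real symmetric trace-free $4\times4$ matrices; $X_0=X-\frac14(\operatorname{tr}X)I$; $\operatorname{Adj}$ is the adjugate. (In the paper's framework, invariant half-flat structures on $S^3\times S^3$ with $[\gamma]=0$ are encoded by commuting pairs $(Q,P)$ of such matrices with $\det Q<0$, where $P$ encodes $\omega$ and $Q$ encodes a primitive of $\gamma$; nearly-Kähler means both coupled and co-coupled, which in matrix form reads as the two conditions above.) *)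

theory Defs
  imports "HOL-Analysis.Analysis"
begin

(* Adjugate (classical adjoint): (Adj A)_{ij} = (-1)^(i+j) M_{ji}, which equals the
   determinant of A with row j replaced by the standard basis row e_i. *)
definition adjugate :: "real^'n^'n \<Rightarrow> real^'n^'n" where
  "adjugate A = (\<chi> i j. det (\<chi> k l. if k = j then (if l = i then 1 else 0) else A $ k $ l))"

definition tracefree_part :: "real^'n^'n \<Rightarrow> real^'n^'n" where
  "tracefree_part X = X - (trace X / real CARD('n)) *\<^sub>R mat 1"

definition sym_tracefree :: "real^'n^'n \<Rightarrow> bool" where
  "sym_tracefree X \<longleftrightarrow> transpose X = X \<and> trace X = 0"

definition Dmat :: "real^4^4" where
  "Dmat = (\<chi> i j. if i = j then (if i = 0 then -3 else 1) else 0)"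

end

theory Submission
  imports Defs
begin

(* The co-coupled condition says that Adj Q is a
   quadratic polynomial c Q^2 + s I.  Since Q Adj Q = det Q I, combining this with the
   Cayley-Hamilton identity 6 Q^4 - 3 tr(Q^2) Q^2 - 2 tr(Q^3) Q + 6 det Q I = 0 of a
   trace-free 4x4 matrix shows that Q satisfies a quadratic relation, and feeding that
   relation back into Cayley-Hamilton pins it down to Q^2 = -2b Q + 3b^2 I with b <> 0.
   Then R = (I - Q/b)/4 is a symmetric idempotent of trace one, i.e. R = v v^T for a unit
   vector v, so Q = b (I - 4 v v^T) = b g D g^T for a rotation g mapping e_0 to v. *)

lemma matrix_eqI: "(\<And>i j. A$i$j = B$i$j) \<Longrightarrow> (A::'a^'n^'m) = B"
  by (simp add: vec_eq_iff)

lemma matrix_mul_combination_right: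
  fixes A :: "real^'n^'m" and B C :: "real^'p^'n"
  shows "A ** (x *\<^sub>R B + y *\<^sub>R C) = x *\<^sub>R (A ** B) + y *\<^sub>R (A ** C)"
  by (simp add: matrix_add_ldistrib matrix_scalar_ac scalar_matrix_assoc[symmetric])

lemma matrix_mul_combination_left:
  fixes A B :: "real^'n^'m" and C :: "real^'p^'n"
  shows "(x *\<^sub>R A + y *\<^sub>R B) ** C = x *\<^sub>R (A ** C) + y *\<^sub>R (B ** C)"
  by (simp add: matrix_matrix_mult_def vec_eq_iff sum.distrib sum_distrib_left algebra_simps)

lemma trace_scaleR:
  fixes A :: "real^'n^'n"
  shows "trace (x *\<^sub>R A) = x * trace A"
  by (simp add: trace_def sum_distrib_left)

(* A nonzero trace-free matrix and the identity are linearly independent: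
   taking the trace kills the first summand. *)
lemma tracefree_combination_zero:
  fixes A :: "real^'n^'n"
  assumes "trace A = 0" and "A \<noteq> 0" and "x *\<^sub>R A + y *\<^sub>R mat 1 = 0"
  shows "x = 0" and "y = 0"
proof -
  have "trace (x *\<^sub>R A + y *\<^sub>R mat 1) = trace (0::real^'n^'n)" using assms(3) by simp
  then show "y = 0"
    by (simp add: trace_add trace_scaleR assms(1) trace_I trace_0[unfolded mat_0])
  with assms show "x = 0" by simp
qed

(* Equality of trace-free parts determines a matrix up to a multiple of the identity.
   This turns the co-coupled condition into a matrix identity for the adjugate. *)
lemma tracefree_part_eq_scaled:
  fixes A B :: "real^'n^'n"
  assumes "tracefree_part A = \<nu> *\<^sub>R tracefree_part B"
  shows "A = \<nu> *\<^sub>R B + ((trace A - \<nu> * trace B) / real CARD('n)) *\<^sub>R mat 1"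
  using assms unfolding tracefree_part_def
  by (simp add: algebra_simps diff_divide_distrib eq_diff_eq)

(* If Q satisfies a quadratic relation, then linear expressions in Q and I are closed
   under multiplication: this is multiplication in R[Q] = R[x]/(x^2 - p x - q). *)
lemma quadratic_relation_mul:
  fixes Q :: "real^'n^'n"
  assumes "Q ** Q = p *\<^sub>R Q + q *\<^sub>R mat 1"
  shows "(a *\<^sub>R Q + b *\<^sub>R mat 1) ** (c *\<^sub>R Q + d *\<^sub>R mat 1)
         = (a * c * p + a * d + b * c) *\<^sub>R Q + (a * c * q + b * d) *\<^sub>R mat 1"
  by (simp add: matrix_mul_combination_left matrix_mul_combination_right assms algebra_simps)

(* The defining property of the adjugate, for matrices of any size: expanding along
   row j, the (i,j) entry of A ** adjugate A is the determinant of A with row j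
   replaced by row i. *)
lemma matrix_mul_adjugate:
  fixes A :: "real^'n^'n"
  shows "A ** adjugate A = det A *\<^sub>R mat 1"
proof -
  have unit_row: "(\<chi> k l. if k = j then (if l = m then 1 else 0) else A$k$l) =
     (\<chi> r. if r = j then axis m 1 else row r A)" for j m :: 'n
    by (simp add: vec_eq_iff axis_def row_def)
  have rowsum: "(\<Sum>m\<in>UNIV. A$i$m *s axis m (1::real)) = row i A" for i
    by (simp add: vec_eq_iff row_def axis_def if_distrib cong: if_cong)
  have key: "(A ** adjugate A)$i$j = det (\<chi> r. if r = j then row i A else row r A)" for i j
  proof -
    have "(A ** adjugate A)$i$j = (\<Sum>m\<in>UNIV. A$i$m * det (\<chi> r. if r = j then axis m 1 else row r A))"
      by (simp add: matrix_matrix_mult_def adjugate_def unit_row)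
    also have "\<dots> = (\<Sum>m\<in>UNIV. det (\<chi> r. if r = j then A$i$m *s axis m 1 else row r A))"
      by (simp add: det_row_mul)
    also have "\<dots> = det (\<chi> r. if r = j then (\<Sum>m\<in>UNIV. A$i$m *s axis m (1::real)) else row r A)"
      by (rule det_linear_row_sum[symmetric]) simp
    finally show ?thesis unfolding rowsum .
  qed
  show ?thesis
  proof (rule matrix_eqI)
    fix i j
    show "(A ** adjugate A) $ i $ j = (det A *\<^sub>R mat 1) $ i $ j"
    proof (cases "i = j")
      case True
      have "(\<chi> r. if r = j then row i A else row r A) = A" using True by (simp add: vec_eq_iff row_def)
      then show ?thesis using True key[of i j] by (simp add: mat_def)
    next
      case False
      have "det (\<chi> r. if r = j then row i A else row r A) = 0"
        by (rule det_identical_rows[OF False]) (simp add: row_def vec_eq_iff False)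
      then show ?thesis using False key by (simp add: mat_def)
    qed
  qed
qed

definition outer :: "real^'n \<Rightarrow> real^'n^'n" where
  "outer v = (\<chi> i j. v$i * v$j)"

lemma conj_outer:
  fixes g :: "real^'n^'n"
  shows "g ** outer u ** transpose g = outer (g *v u)"
proof -
  have gu: "(g ** outer u)$i$j = (g *v u)$i * u$j" for i j
    by (simp add: matrix_matrix_mult_def matrix_vector_mult_def outer_def sum_distrib_right mult.assoc)
  show ?thesis
  proof (rule matrix_eqI)
    fix i j
    have "(g ** outer u ** transpose g)$i$j = (\<Sum>m\<in>UNIV. (g *v u)$i * (u$m * g$j$m))"
      by (simp add: matrix_matrix_mult_def[of "g ** outer u"] gu transpose_def mult.assoc)
    also have "\<dots> = (g *v u)$i * (g *v u)$j"
      by (simp add: matrix_vector_mult_def sum_distrib_left mult_ac)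
    finally show "(g ** outer u ** transpose g)$i$j = outer (g *v u)$i$j"
      by (simp add: outer_def)
  qed
qed

lemma symmetric_matrix_entry:
  assumes "transpose (A::'a^'n^'n) = A"
  shows "A$j$i = A$i$j"
  using arg_cong[OF assms, of "\<lambda>M. M$i$j"] by (simp add: transpose_def)

lemma idempotent_matrix_entry:
  fixes A :: "real^'n^'n"
  assumes "A ** A = A"
  shows "(\<Sum>m\<in>UNIV. A$i$m * A$m$j) = A$i$j"
  using arg_cong[OF assms, of "\<lambda>M. M$i$j"] by (simp add: matrix_matrix_mult_def)

(* For a symmetric idempotent R and an index k, the sum of squares measuring how far
   R is from the rank-one matrix (column k)(column k)^T / R_kk equals R_kk^2 (tr R - 1). *)
lemma symmetric_idempotent_defect:
  fixes R :: "real^'n^'n"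
  assumes sym: "transpose R = R" and idem: "R ** R = R"
  shows "(\<Sum>i\<in>UNIV. \<Sum>j\<in>UNIV. (R$i$j * R$k$k - R$i$k * R$j$k)^2) = (R$k$k)^2 * (trace R - 1)"
proof -
  let ?r = "R$k$k"
  have column: "(\<Sum>i\<in>UNIV. (R$i$k)^2) = ?r"
    using idempotent_matrix_entry[OF idem, of k k]
    by (simp add: power2_eq_square symmetric_matrix_entry[OF sym])
  have squares: "(\<Sum>i\<in>UNIV. \<Sum>j\<in>UNIV. (R$i$j)^2) = trace R"
    using idempotent_matrix_entry[OF idem]
    by (simp add: trace_def power2_eq_square symmetric_matrix_entry[OF sym])
  have mixed: "(\<Sum>i\<in>UNIV. \<Sum>j\<in>UNIV. R$i$j * R$i$k * R$j$k) = ?r"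
  proof -
    have "(\<Sum>i\<in>UNIV. \<Sum>j\<in>UNIV. R$i$j * R$i$k * R$j$k) = (\<Sum>i\<in>UNIV. R$i$k * (\<Sum>j\<in>UNIV. R$i$j * R$j$k))"
      by (simp add: sum_distrib_left mult_ac)
    also have "\<dots> = (\<Sum>i\<in>UNIV. (R$i$k)^2)"
      by (simp add: idempotent_matrix_entry[OF idem] power2_eq_square)
    finally show ?thesis using column by simp
  qed
  have products: "(\<Sum>i\<in>UNIV. \<Sum>j\<in>UNIV. (R$i$k)^2 * (R$j$k)^2) = ?r^2"
    using sum_product[of "\<lambda>i. (R$i$k)^2" UNIV "\<lambda>j. (R$j$k)^2" UNIV] column
    by (simp add: power2_eq_square)
  have "(\<Sum>i\<in>UNIV. \<Sum>j\<in>UNIV. (R$i$j * ?r - R$i$k * R$j$k)^2) =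
     ?r^2 * (\<Sum>i\<in>UNIV. \<Sum>j\<in>UNIV. (R$i$j)^2) - 2 * ?r * (\<Sum>i\<in>UNIV. \<Sum>j\<in>UNIV. R$i$j * R$i$k * R$j$k)
     + (\<Sum>i\<in>UNIV. \<Sum>j\<in>UNIV. (R$i$k)^2 * (R$j$k)^2)"
    by (simp add: power2_eq_square algebra_simps sum.distrib sum_subtractf sum_distrib_left)
  then show ?thesis
    unfolding squares mixed products by (simp add: power2_eq_square algebra_simps)
qed

(* A symmetric idempotent of trace 1 is the orthogonal projection onto a unit vector.
   Some diagonal entry R_kk is positive, and the defect above vanishes. *)
lemma symmetric_idempotent_trace_one:
  fixes R :: "real^'n^'n"
  assumes sym: "transpose R = R" and idem: "R ** R = R" and tr: "trace R = 1"
  obtains v where "norm v = 1" and "R = outer v"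
proof -
  obtain k where r_pos: "R$k$k > 0"
  proof (rule ccontr)
    assume "\<not> thesis"
    with that have "\<forall>k. R$k$k \<le> 0" by (meson not_le)
    then have "trace R \<le> 0" unfolding trace_def by (simp add: sum_nonpos)
    with tr show False by simp
  qed
  let ?r = "R$k$k"
  have rank_one: "R$i$j * ?r = R$i$k * R$j$k" for i j
  proof -
    have "(\<Sum>i\<in>UNIV. \<Sum>j\<in>UNIV. (R$i$j * ?r - R$i$k * R$j$k)^2) = 0"
      using symmetric_idempotent_defect[OF sym idem] tr by simp
    then have "(R$i$j * ?r - R$i$k * R$j$k)^2 = 0"
      by (simp add: sum_nonneg sum_nonneg_eq_0_iff)
    then show ?thesis by simp
  qed
  define v where "v = (\<chi> i. R$i$k / sqrt ?r)"
  have "R = outer v"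
    using rank_one r_pos
    by (intro matrix_eqI) (simp add: outer_def v_def field_simps real_sqrt_mult[symmetric])
  moreover have "norm v = 1"
  proof -
    have "inner v v = (\<Sum>i\<in>UNIV. (R$i$k)^2) / ?r"
      using r_pos by (simp add: inner_vec_def v_def sum_divide_distrib power2_eq_square)
    also have "\<dots> = 1"
      using idempotent_matrix_entry[OF idem, of k k] r_pos
      by (simp add: power2_eq_square symmetric_matrix_entry[OF sym])
    finally show ?thesis by (simp add: norm_eq_sqrt_inner)
  qed
  ultimately show thesis using that by blast
qed

lemma Dmat_outer: "Dmat = mat 1 - 4 *\<^sub>R outer (axis 0 1)"
  by (rule matrix_eqI) (simp add: Dmat_def mat_def outer_def axis_def)

(* Every matrix I - 4 v v^T with |v| = 1 is conjugate to D by a rotation: take a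
   rotation sending e_0 to v. *)
lemma rotation_conj_Dmat:
  fixes v :: "real^4"
  assumes "norm v = 1"
  obtains g where "rotation_matrix g" and "g ** Dmat ** transpose g = mat 1 - 4 *\<^sub>R outer v"
proof -
  obtain g where rot: "rotation_matrix g" and gv: "g *v axis 0 1 = v"
    using rotation_matrix_exists_basis[of v 0] assms by auto
  have orth: "g ** transpose g = mat 1"
    using rot by (simp add: rotation_matrix_def orthogonal_matrix_def)
  have "g ** Dmat ** transpose g = g ** transpose g - 4 *\<^sub>R (g ** outer (axis 0 1) ** transpose g)"
    using matrix_mul_combination_right[of g 1 "mat 1" "-4" "outer (axis 0 1)"]
      matrix_mul_combination_left[of 1 g "-4" "g ** outer (axis 0 1)" "transpose g"]
    by (simp add: Dmat_outer)
  also have "\<dots> = mat 1 - 4 *\<^sub>R outer v"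
    unfolding orth conj_outer gv ..
  finally show thesis using rot that by blast
qed

lemma det_4:
  "det (A::'a::comm_ring_1^4^4) =
 A$1$1*A$2$2*A$3$3*A$4$4 - A$1$1*A$2$2*A$3$4*A$4$3 - A$1$1*A$2$3*A$3$2*A$4$4 + A$1$1*A$2$3*A$3$4*A$4$2
+ A$1$1*A$2$4*A$3$2*A$4$3 - A$1$1*A$2$4*A$3$3*A$4$2 - A$1$2*A$2$1*A$3$3*A$4$4 + A$1$2*A$2$1*A$3$4*A$4$3
+ A$1$2*A$2$3*A$3$1*A$4$4 - A$1$2*A$2$3*A$3$4*A$4$1 - A$1$2*A$2$4*A$3$1*A$4$3 + A$1$2*A$2$4*A$3$3*A$4$1
+ A$1$3*A$2$1*A$3$2*A$4$4 - A$1$3*A$2$1*A$3$4*A$4$2 - A$1$3*A$2$2*A$3$1*A$4$4 + A$1$3*A$2$2*A$3$4*A$4$1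
+ A$1$3*A$2$4*A$3$1*A$4$2 - A$1$3*A$2$4*A$3$2*A$4$1 - A$1$4*A$2$1*A$3$2*A$4$3 + A$1$4*A$2$1*A$3$3*A$4$2
+ A$1$4*A$2$2*A$3$1*A$4$3 - A$1$4*A$2$2*A$3$3*A$4$1 - A$1$4*A$2$3*A$3$1*A$4$2 + A$1$4*A$2$3*A$3$2*A$4$1"
proof -
  have f1: "finite {2::4, 3, 4}" "1 \<notin> {2::4, 3, 4}" by auto
  have f2: "finite {3::4, 4}" "2 \<notin> {3::4, 4}" by auto
  have f3: "finite {4::4}" "3 \<notin> {4::4}" by auto
  show ?thesis
    unfolding det_def UNIV_4
    unfolding sum_over_permutations_insert[OF f1]
    unfolding sum_over_permutations_insert[OF f2]
    unfolding sum_over_permutations_insert[OF f3]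
    unfolding permutes_sing
    by (simp add: sign_swap_id permutation_swap_id sign_compose sign_id swap_id_eq permutation_compose algebra_simps)
qed

(* Cayley-Hamilton for trace-free 4x4 matrices, with the coefficients of the
   characteristic polynomial expressed through tr Q^2, tr Q^3 and det Q
   (Newton's identities with tr Q = 0). *)
lemma cayley_hamilton_tracefree_4:
  fixes Q :: "real^4^4"
  assumes "trace Q = 0"
  shows "6 *\<^sub>R (Q ** Q ** Q ** Q) - (3 * trace (Q ** Q)) *\<^sub>R (Q ** Q)
         - (2 * trace (Q ** Q ** Q)) *\<^sub>R Q + (6 * det Q) *\<^sub>R mat 1 = 0"
proof -
  have last_diagonal: "Q$4$4 = -(Q$1$1 + Q$2$2 + Q$3$3)"
    using assms by (simp add: trace_def sum_4)
  show ?thesis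
    unfolding vec_eq_iff forall_4 matrix_matrix_mult_def det_4 sum_4 trace_def mat_def
    by (simp add: last_diagonal) algebra
qed

(* If the adjugate of an invertible trace-free 4x4 matrix is a quadratic polynomial
   c Q^2 + s I, then Q itself satisfies a quadratic relation: multiplying by Q gives
   c Q^3 + s Q = det Q I, so c <> 0, and eliminating Q^4 from Q times this identity
   and the Cayley-Hamilton identity leaves a relation of degree two whose constant
   term 6 c det Q is nonzero. *)
lemma adjugate_quadratic_imp_quadratic:
  fixes Q :: "real^4^4"
  assumes tr: "trace Q = 0" and det: "det Q \<noteq> 0"
    and adj: "adjugate Q = c *\<^sub>R (Q ** Q) + s *\<^sub>R mat 1"
  obtains p q where "Q ** Q = p *\<^sub>R Q + q *\<^sub>R mat 1"
proof -
  let ?d = "det Q" and ?t2 = "trace (Q ** Q)" and ?t3 = "trace (Q ** Q ** Q)"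
  have Q_ne: "Q \<noteq> 0" using det by (metis det_0 mat_0)
  have cubic: "c *\<^sub>R (Q ** Q ** Q) + s *\<^sub>R Q = ?d *\<^sub>R mat 1"
    using matrix_mul_adjugate[of Q]
    unfolding adj matrix_mul_combination_right matrix_mul_assoc by simp
  have quartic: "c *\<^sub>R (Q ** Q ** Q ** Q) + s *\<^sub>R (Q ** Q) = ?d *\<^sub>R Q"
    using arg_cong[OF cubic, of "\<lambda>M. M ** Q"]
    by (simp add: matrix_mul_combination_left scalar_matrix_assoc[symmetric])
  have "c * ?t3 = 4 * ?d"
    using arg_cong[OF cubic, of trace] by (simp add: trace_add trace_scaleR tr trace_I)
  then have c_ne: "c \<noteq> 0" using det by auto
  define \<alpha> where "\<alpha> = -(3 * c * ?t2 + 6 * s)"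
  define \<beta> where "\<beta> = 6 * ?d - 2 * c * ?t3"
  define \<gamma> where "\<gamma> = 6 * c * ?d"
  have \<gamma>_ne: "\<gamma> \<noteq> 0" using c_ne det \<gamma>_def by simp
  have "\<alpha> *\<^sub>R (Q ** Q) + \<beta> *\<^sub>R Q + \<gamma> *\<^sub>R mat 1 =
    c *\<^sub>R (6 *\<^sub>R (Q ** Q ** Q ** Q) - (3 * ?t2) *\<^sub>R (Q ** Q) - (2 * ?t3) *\<^sub>R Q + (6 * ?d) *\<^sub>R mat 1)
    - 6 *\<^sub>R (c *\<^sub>R (Q ** Q ** Q ** Q) + s *\<^sub>R (Q ** Q) - ?d *\<^sub>R Q)"
    unfolding \<alpha>_def \<beta>_def \<gamma>_def by (simp add: algebra_simps)
  then have quadratic: "\<alpha> *\<^sub>R (Q ** Q) + \<beta> *\<^sub>R Q + \<gamma> *\<^sub>R mat 1 = 0"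
    using cayley_hamilton_tracefree_4[OF tr] quartic by simp
  have "\<alpha> \<noteq> 0"
  proof
    assume "\<alpha> = 0"
    then have "\<beta> *\<^sub>R Q + \<gamma> *\<^sub>R mat 1 = 0" using quadratic by simp
    then show False using tracefree_combination_zero(2)[OF tr Q_ne] \<gamma>_ne by blast
  qed
  moreover have "\<alpha> *\<^sub>R (Q ** Q) = - (\<beta> *\<^sub>R Q + \<gamma> *\<^sub>R mat 1)"
    using quadratic by (simp only: eq_neg_iff_add_eq_0 add.assoc)
  ultimately have "\<alpha> *\<^sub>R (Q ** Q) = \<alpha> *\<^sub>R ((-\<beta>/\<alpha>) *\<^sub>R Q + (-\<gamma>/\<alpha>) *\<^sub>R mat 1)"
    by (simp add: scaleR_diff_right)
  with \<open>\<alpha> \<noteq> 0\<close> have "Q ** Q = (-\<beta>/\<alpha>) *\<^sub>R Q + (-\<gamma>/\<alpha>) *\<^sub>R mat 1"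
    by simp
  then show thesis by (rule that)
qed

(* A trace-free 4x4 matrix with det Q < 0 satisfying Q^2 = p Q + q I has
   Q^2 = -2b Q + 3b^2 I for some b <> 0, i.e. its eigenvalues are b (three times)
   and -3b.  Reducing Q^3, Q^4 and the traces modulo the relation, Cayley-Hamilton
   becomes u Q + w I = 0, which forces p (3p^2 - 4q) = 0 and det Q = q^2 - p^2 q;
   p = 0 would give det Q >= 0. *)
lemma quadratic_tracefree_normal_form:
  fixes Q :: "real^4^4"
  assumes tr: "trace Q = 0" and det: "det Q < 0"
    and quad: "Q ** Q = p *\<^sub>R Q + q *\<^sub>R mat 1"
  obtains b where "b \<noteq> 0" and "Q ** Q = (-2 * b) *\<^sub>R Q + (3 * b^2) *\<^sub>R mat 1"
proof -
  have Q_ne: "Q \<noteq> 0" using det by (metis det_0 mat_0 less_irrefl)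
  have cube: "Q ** Q ** Q = (p * p + q) *\<^sub>R Q + (p * q) *\<^sub>R mat 1"
    using quadratic_relation_mul[OF quad, of p q 1 0] quad by simp
  have fourth: "Q ** Q ** Q ** Q = (p * p * p + 2 * p * q) *\<^sub>R Q + (p * p * q + q * q) *\<^sub>R mat 1"
    using quadratic_relation_mul[OF quad, of "p * p + q" "p * q" 1 0] cube by (simp add: algebra_simps)
  have trace2: "trace (Q ** Q) = 4 * q"
    by (simp add: quad trace_add trace_scaleR tr trace_I)
  have trace3: "trace (Q ** Q ** Q) = 4 * p * q"
    unfolding cube by (simp add: trace_add trace_scaleR tr trace_I)
  define u where "u = 6 * p * p * p - 8 * p * q"
  define w where "w = 6 * p * p * q - 6 * q * q + 6 * det Q"
  have "u *\<^sub>R Q + w *\<^sub>R mat 1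
     = 6 *\<^sub>R (Q ** Q ** Q ** Q) - (3 * trace (Q ** Q)) *\<^sub>R (Q ** Q)
         - (2 * trace (Q ** Q ** Q)) *\<^sub>R Q + (6 * det Q) *\<^sub>R mat 1"
    unfolding fourth trace2 trace3 unfolding quad u_def w_def
    by (intro matrix_eqI) (simp add: algebra_simps)
  also have "\<dots> = 0" by (rule cayley_hamilton_tracefree_4[OF tr])
  finally have "u *\<^sub>R Q + w *\<^sub>R mat 1 = 0" .
  then have "u = 0" and "w = 0"
    using tracefree_combination_zero[OF tr Q_ne] by auto
  have p_ne: "p \<noteq> 0"
  proof
    assume "p = 0"
    with \<open>w = 0\<close> have "det Q = q * q" unfolding w_def by simp
    with det show False by (metis not_less zero_le_square)
  qed
  with \<open>u = 0\<close> have "q = 3 * (p / 2)^2" unfolding u_def by (simp add: algebra_simps power2_eq_square)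
  then have "Q ** Q = (-2 * (-p / 2)) *\<^sub>R Q + (3 * (-p / 2)^2) *\<^sub>R mat 1"
    using quad by simp
  moreover have "-p / 2 \<noteq> 0" using p_ne by simp
  ultimately show thesis using that by blast
qed

(* A symmetric trace-free matrix with Q^2 = -2b Q + 3b^2 I, b <> 0, is b times a
   rotation conjugate of D: R = (I - Q/b)/4 is a symmetric idempotent of trace 1,
   hence R = v v^T, and Q = b (I - 4 v v^T). *)
lemma quadratic_conj_Dmat:
  fixes Q :: "real^4^4"
  assumes sym: "transpose Q = Q" and tr: "trace Q = 0" and b_ne: "b \<noteq> 0"
    and quad: "Q ** Q = (-2 * b) *\<^sub>R Q + (3 * b^2) *\<^sub>R mat 1"
  obtains g where "rotation_matrix g" and "Q = b *\<^sub>R (g ** Dmat ** transpose g)"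
proof -
  define R where "R = (-1 / (4 * b)) *\<^sub>R Q + (1 / 4) *\<^sub>R mat 1"
  have "R ** R = ((-1 / (4 * b)) * (-1 / (4 * b)) * (-2 * b) + (-1 / (4 * b)) * (1 / 4)
        + (1 / 4) * (-1 / (4 * b))) *\<^sub>R Q
      + ((-1 / (4 * b)) * (-1 / (4 * b)) * (3 * b^2) + (1 / 4) * (1 / 4)) *\<^sub>R mat 1"
    unfolding R_def by (rule quadratic_relation_mul[OF quad])
  also have "\<dots> = R"
    unfolding R_def using b_ne by (simp add: field_simps power2_eq_square)
  finally have "R ** R = R" .
  moreover have "transpose R = R"
    by (intro matrix_eqI) (simp add: R_def transpose_def mat_def symmetric_matrix_entry[OF sym])
  moreover have "trace R = 1"
    by (simp add: R_def trace_add trace_sub trace_scaleR tr trace_I)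
  ultimately obtain v where "norm v = 1" and R_outer: "R = outer v"
    using symmetric_idempotent_trace_one by blast
  then obtain g where rot: "rotation_matrix g" and g: "g ** Dmat ** transpose g = mat 1 - 4 *\<^sub>R outer v"
    using rotation_conj_Dmat by blast
  have "Q = b *\<^sub>R (mat 1 - 4 *\<^sub>R R)"
    using b_ne unfolding R_def by (simp add: algebra_simps)
  also have "\<dots> = b *\<^sub>R (g ** Dmat ** transpose g)"
    unfolding g R_outer ..
  finally show thesis using rot that by blast
qed

theorem mainTheorem7:
  fixes Q P :: "real^4^4"
  assumes "sym_tracefree Q" and "sym_tracefree P" and "det Q < 0"
    and "\<exists>\<mu>::real. \<mu> \<noteq> 0 \<and> P = \<mu> *\<^sub>R Q"
    and "\<exists>\<nu>::real. tracefree_part (adjugate Q) = \<nu> *\<^sub>R tracefree_part (P ** P)"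
  shows "\<exists>g::real^4^4. \<exists>q p::real. rotation_matrix g \<and> q \<noteq> 0 \<and> p \<noteq> 0 \<and>
           Q = q *\<^sub>R (g ** Dmat ** transpose g) \<and> P = p *\<^sub>R (g ** Dmat ** transpose g)"
proof -
  have sym: "transpose Q = Q" and tr: "trace Q = 0"
    using assms(1) by (auto simp: sym_tracefree_def)
  obtain \<mu> where \<mu>_ne: "\<mu> \<noteq> 0" and P: "P = \<mu> *\<^sub>R Q" using assms(4) by blast
  obtain \<nu> where \<nu>: "tracefree_part (adjugate Q) = \<nu> *\<^sub>R tracefree_part (P ** P)"
    using assms(5) by blast
  have PP: "P ** P = (\<mu> * \<mu>) *\<^sub>R (Q ** Q)"
    unfolding P by (simp add: matrix_scalar_ac scalar_matrix_assoc[symmetric])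
  define s where "s = (trace (adjugate Q) - \<nu> * trace (P ** P)) / real CARD(4)"
  have "adjugate Q = \<nu> *\<^sub>R (P ** P) + s *\<^sub>R mat 1"
    unfolding s_def by (rule tracefree_part_eq_scaled[OF \<nu>])
  then have adj: "adjugate Q = (\<nu> * (\<mu> * \<mu>)) *\<^sub>R (Q ** Q) + s *\<^sub>R mat 1"
    by (simp add: PP)
  have "det Q \<noteq> 0" using assms(3) by simp
  then obtain p q where "Q ** Q = p *\<^sub>R Q + q *\<^sub>R mat 1"
    using adjugate_quadratic_imp_quadratic[OF tr _ adj] by blast
  then obtain b where "b \<noteq> 0" and "Q ** Q = (-2 * b) *\<^sub>R Q + (3 * b^2) *\<^sub>R mat 1"
    using quadratic_tracefree_normal_form[OF tr assms(3)] by blast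
  then obtain g where rot: "rotation_matrix g" and Q: "Q = b *\<^sub>R (g ** Dmat ** transpose g)"
    using quadratic_conj_Dmat[OF sym tr] by blast
  have "P = (\<mu> * b) *\<^sub>R (g ** Dmat ** transpose g)"
    unfolding P by (subst Q) simp
  then show ?thesis
    using rot Q \<open>b \<noteq> 0\<close> \<mu>_ne by (intro exI[of _ g] exI[of _ b] exI[of _ "\<mu> * b"]) simp
qed

end
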